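(* For every positive integer $N$ and every admissible index $\boldsymbol{k}=(k_1,\dots,k_r)$, \[ \zeta^{\diamondsuit\star}_N(\boldsymbol{k})=\sum_{A\subset[r]^1_{\boldsymbol{k}}}\ \sum_{(n_1,\dots,n_r)\in S^\star_{r,N}(A)}\Bigl(\prod_{i\in A}\frac1{N-n_i}\Bigr)\Bigl(\prod_{i\in[r]\setminus A}\frac1{n_i^{k_i}}\Bigr), \] where $S^\star_{r,N}(A)$ is the set of $(n_1,\dots,n_r)\in[N-1]^r$ such that for each $i\in[r-1]$: $n_i\le n_{i+1}$ if $i\in A$ or $i+1\notin A$, and $n_i<n_{i+1}$ if $i\notin A$ and $i+1\in A$.
   Context: $[n]=\{1,\dots,n\}$. An index is a tuple of positive integers; admissible = nonempty with last entry $\ge2$. For admissible $\boldsymbol{k}=(k_1,\dots,k_r)$: $[r]^1_{\boldsymbol{k}}=\{i:k_i=1\}$, $S_{r,N}(A)=\{(n_1,\dots,n_r)\in[N-1]^r: n_i\le n_{i+1}\ (i\in A),\ n_i<n_{i+1}\ (i\in[r-1]\setminus A)\}$, $\zeta^\diamondsuit_N(\boldsymbol{k})=\sum_{A\subset[r]^1_{\boldsymbol{k}}}\sum_{S_{r,N}(A)}\prod_{i\in A}(N-n_i)^{-1}\prod_{i\notin A}n_i^{-k_i}$. Write $\boldsymbol{l}\preceq\boldsymbol{k}$ if $\boldsymbol{l}$ is obtained by filling each $\square$ in $(k_1\,\square\cdots\square\,k_r)$ with a comma or a plus sign. $\zeta^{\diamondsuit\star}_N(\boldsymbol{k})=\sum_{\boldsymbol{l}\preceq\boldsymbol{k}}\zeta^\diamondsuit_N(\boldsymbol{l})$.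 *)

theory Defs
  imports Complex_Main
begin

text \<open>Indices are lists of naturals; positions are 1-based: entry i of xs is xs ! (i - 1).\<close>

definition is_index :: "nat list \<Rightarrow> bool" where
  "is_index k \<longleftrightarrow> (\<forall>x\<in>set k. 0 < x)"

definition admissible :: "nat list \<Rightarrow> bool" where
  "admissible k \<longleftrightarrow> is_index k \<and> k \<noteq> [] \<and> 2 \<le> last k"

definition ones :: "nat list \<Rightarrow> nat set" where
  "ones k = {i \<in> {1..length k}. k ! (i - 1) = 1}"

definition S_set :: "nat \<Rightarrow> nat \<Rightarrow> nat set \<Rightarrow> nat list set" where
  "S_set r N A = {ns. length ns = r \<and> set ns \<subseteq> {1..N - 1} \<and>
     (\<forall>i\<in>{1..r - 1}. (i \<in> A \<longrightarrow> ns ! (i - 1) \<le> ns ! i) \<and>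
                      (i \<notin> A \<longrightarrow> ns ! (i - 1) < ns ! i))}"

definition S_star_set :: "nat \<Rightarrow> nat \<Rightarrow> nat set \<Rightarrow> nat list set" where
  "S_star_set r N A = {ns. length ns = r \<and> set ns \<subseteq> {1..N - 1} \<and>
     (\<forall>i\<in>{1..r - 1}. ((i \<in> A \<or> i + 1 \<notin> A) \<longrightarrow> ns ! (i - 1) \<le> ns ! i) \<and>
                      ((i \<notin> A \<and> i + 1 \<in> A) \<longrightarrow> ns ! (i - 1) < ns ! i))}"

definition term_diamond :: "nat \<Rightarrow> nat list \<Rightarrow> nat set \<Rightarrow> nat list \<Rightarrow> real" where
  "term_diamond N k A ns =
     (\<Prod>i\<in>A. 1 / (real N - real (ns ! (i - 1)))) *
     (\<Prod>i\<in>{1..length k} - A. 1 / real (ns ! (i - 1)) ^ (k ! (i - 1)))"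

definition zeta_diamond :: "nat \<Rightarrow> nat list \<Rightarrow> real" where
  "zeta_diamond N k = (\<Sum>A\<in>Pow (ones k). \<Sum>ns\<in>S_set (length k) N A. term_diamond N k A ns)"

text \<open>All indices obtained by filling each box in (k_1 [] ... [] k_r) with a comma or a plus,
  listed once per filling.\<close>
fun add_hd :: "nat \<Rightarrow> nat list \<Rightarrow> nat list" where
  "add_hd a [] = [a]"
| "add_hd a (h # t) = (a + h) # t"

fun fillings :: "nat list \<Rightarrow> nat list list" where
  "fillings [] = [[]]"
| "fillings [k] = [[k]]"
| "fillings (k # k' # ks) =
     map (\<lambda>l. k # l) (fillings (k' # ks)) @ map (add_hd k) (fillings (k' # ks))"

definition zeta_diamond_star :: "nat \<Rightarrow> nat list \<Rightarrow> real" where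
  "zeta_diamond_star N k = sum_list (map (zeta_diamond N) (fillings k))"

end

(*
  Both sides are sums of term_diamond over pairs (A, ns) in which consecutive entries n_i, n_(i+1)
  are compared by a rule depending only on whether i and i + 1 lie in A.  Grouping the pairs by
  the first entry and by whether position 1 lies in A turns each side into a first-step
  recursion.  The rules for S and S^star differ only when neither i nor i + 1 lies in A: S demands
  n_i < n_(i+1), S^star allows n_i = n_(i+1).  Such a diagonal term has the factor
  n_i^-k_i * n_i^-k_(i+1) = n_i^-(k_i + k_(i+1)), so it is a term of the index in which the box
  between k_i and k_(i+1) is filled with a plus; by induction on the length of k, summing over all
  fillings therefore gives exactly the S^star side.
*)
theory Submission
  imports Defs
begin

type_synonym step_rule = "bool \<Rightarrow> bool \<Rightarrow> nat \<Rightarrow> nat \<Rightarrow> bool"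

definition chain_lists :: "step_rule \<Rightarrow> nat \<Rightarrow> nat \<Rightarrow> nat set \<Rightarrow> nat list set" where
  "chain_lists R r N A = {ns. length ns = r \<and> set ns \<subseteq> {1..N - 1} \<and>
     (\<forall>i\<in>{1..r - 1}. R (i \<in> A) (i + 1 \<in> A) (ns ! (i - 1)) (ns ! i))}"

definition diamond_step :: step_rule where
  "diamond_step p q x y \<longleftrightarrow> (if p then x \<le> y else x < y)"

definition star_step :: step_rule where
  "star_step p q x y \<longleftrightarrow> (if \<not> p \<and> q then x < y else x \<le> y)"

lemma S_set_eq_chain_lists: "S_set r N A = chain_lists diamond_step r N A"
  unfolding S_set_def chain_lists_def diamond_step_def by auto

lemma S_star_set_eq_chain_lists: "S_star_set r N A = chain_lists star_step r N A"
  unfolding S_star_set_def chain_lists_def star_step_def by auto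

lemma finite_chain_lists: "finite (chain_lists R r N A)"
proof (rule finite_subset)
  show "chain_lists R r N A \<subseteq> {ns. set ns \<subseteq> {1..N - 1} \<and> length ns = r}"
    unfolding chain_lists_def by auto
  show "finite {ns. set ns \<subseteq> {1..N - 1} \<and> length ns = r}"
    by (rule finite_lists_length_eq) simp
qed

text \<open>Positions are 1-based: a set of positions of \<open>a # k\<close> is determined by whether it contains 1
  and by the (shifted) set of positions of \<open>k\<close> it contains.\<close>
definition cons_pos :: "bool \<Rightarrow> nat set \<Rightarrow> nat set" where
  "cons_pos b B = (if b then {1} else {}) \<union> Suc ` B"

lemma one_mem_cons_pos [simp]: "0 \<notin> B \<Longrightarrow> 1 \<in> cons_pos b B \<longleftrightarrow> b"
  unfolding cons_pos_def by auto

lemma Suc_mem_cons_pos [simp]: "0 < j \<Longrightarrow> Suc j \<in> cons_pos b B \<longleftrightarrow> j \<in> B"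
  unfolding cons_pos_def by auto

lemma cons_pos_eq_iff:
  assumes "0 \<notin> B" "0 \<notin> B'"
  shows "cons_pos b B = cons_pos b' B' \<longleftrightarrow> b = b' \<and> B = B'"
proof
  assume eq: "cons_pos b B = cons_pos b' B'"
  then have "b = b'"
    using one_mem_cons_pos[OF assms(1), of b] one_mem_cons_pos[OF assms(2), of b'] by simp
  moreover have "B = B'"
  proof (intro set_eqI)
    fix j show "j \<in> B \<longleftrightarrow> j \<in> B'"
      using assms eq Suc_mem_cons_pos[of j b B] Suc_mem_cons_pos[of j b' B'] by (cases j) auto
  qed
  ultimately show "b = b' \<and> B = B'" ..
qed simp

lemma ones_subset: "ones k \<subseteq> {1..length k}"
  unfolding ones_def by auto

lemma ones_Cons: "ones (a # k) = cons_pos (a = 1) (ones k)"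
proof (intro set_eqI)
  fix i show "i \<in> ones (a # k) \<longleftrightarrow> i \<in> cons_pos (a = 1) (ones k)"
    unfolding ones_def cons_pos_def by (cases i; cases "i - 1") auto
qed

lemma bij_betw_cons_pos_Pow_ones:
  "bij_betw (\<lambda>(b, B). cons_pos b B) ({b. b \<longrightarrow> a = 1} \<times> Pow (ones k)) (Pow (ones (a # k)))"
proof (rule bij_betw_imageI)
  show "inj_on (\<lambda>(b, B). cons_pos b B) ({b. b \<longrightarrow> a = 1} \<times> Pow (ones k))"
  proof (rule inj_onI, clarify)
    fix b B b' B' assume B: "B \<subseteq> ones k" "B' \<subseteq> ones k" and eq: "cons_pos b B = cons_pos b' B'"
    have "0 \<notin> B" "0 \<notin> B'"
      using B ones_subset[of k] by auto
    with eq show "b = b' \<and> B = B'"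
      by (simp add: cons_pos_eq_iff)
  qed
  show "(\<lambda>(b, B). cons_pos b B) ` ({b. b \<longrightarrow> a = 1} \<times> Pow (ones k)) = Pow (ones (a # k))"
  proof
    show "(\<lambda>(b, B). cons_pos b B) ` ({b. b \<longrightarrow> a = 1} \<times> Pow (ones k)) \<subseteq> Pow (ones (a # k))"
      unfolding ones_Cons cons_pos_def by (auto split: if_splits)
  next
    show "Pow (ones (a # k)) \<subseteq> (\<lambda>(b, B). cons_pos b B) ` ({b. b \<longrightarrow> a = 1} \<times> Pow (ones k))"
    proof
      fix A assume A: "A \<in> Pow (ones (a # k))"
      define B where "B = {j. 0 < j \<and> Suc j \<in> A}"
      have A0: "0 \<notin> A" and k0: "0 \<notin> ones k"
        using A ones_subset[of "a # k"] ones_subset[of k] by auto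
      have A_sub: "A \<subseteq> cons_pos (a = 1) (ones k)"
        using A by (simp add: ones_Cons)
      have "A = cons_pos (1 \<in> A) B"
      proof (rule set_eqI)
        fix i show "i \<in> A \<longleftrightarrow> i \<in> cons_pos (1 \<in> A) B"
          using A0 unfolding B_def cons_pos_def by (cases i; cases "i - 1") auto
      qed
      moreover have "B \<subseteq> ones k"
        using A_sub unfolding B_def by auto
      moreover have "1 \<in> A \<longrightarrow> a = 1"
        using A_sub one_mem_cons_pos[OF k0, of "a = 1"] by auto
      ultimately show "A \<in> (\<lambda>(b, B). cons_pos b B) ` ({b. b \<longrightarrow> a = 1} \<times> Pow (ones k))"
        by (auto intro!: image_eqI[where x = "(1 \<in> A, B)"])
    qed
  qed
qed

lemma ball_atLeastAtMost_Suc_split: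
  "(\<forall>i\<in>{1..r}. P i) \<longleftrightarrow> (r \<noteq> 0 \<longrightarrow> P 1) \<and> (\<forall>j\<in>{1..r - 1}. P (Suc j))"
proof (intro iffI conjI impI ballI)
  fix i assume H: "(r \<noteq> 0 \<longrightarrow> P 1) \<and> (\<forall>j\<in>{1..r - 1}. P (Suc j))" and i: "i \<in> {1..r}"
  show "P i"
  proof (cases "i = 1")
    case False
    then have "i - 1 \<in> {1..r - 1}" "Suc (i - 1) = i"
      using i by auto
    then show ?thesis
      using H by metis
  qed (use H i in auto)
qed auto

lemma Cons_mem_chain_lists_cons_pos:
  assumes "0 \<notin> B"
  shows "m # ns \<in> chain_lists R (Suc r) N (cons_pos b B) \<longleftrightarrow>
    m \<in> {1..N - 1} \<and> ns \<in> chain_lists R r N B \<and> (ns \<noteq> [] \<longrightarrow> R b (1 \<in> B) m (hd ns))"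
proof -
  let ?P = "\<lambda>i. R (i \<in> cons_pos b B) (i + 1 \<in> cons_pos b B) ((m # ns) ! (i - 1)) ((m # ns) ! i)"
  have first: "?P 1 \<longleftrightarrow> R b (1 \<in> B) m (ns ! 0)"
    using one_mem_cons_pos[OF assms, simplified] Suc_mem_cons_pos[of 1 b B]
    by (simp add: numeral_2_eq_2)
  have rest: "?P (Suc j) \<longleftrightarrow> R (j \<in> B) (j + 1 \<in> B) (ns ! (j - 1)) (ns ! j)" if "j \<in> {1..r - 1}" for j
    using that by simp
  show ?thesis
  proof (cases "length ns = r")
    case True
    have "(\<forall>i\<in>{1..Suc r - 1}. ?P i) \<longleftrightarrow>
        (ns \<noteq> [] \<longrightarrow> R b (1 \<in> B) m (hd ns)) \<and>
        (\<forall>j\<in>{1..r - 1}. R (j \<in> B) (j + 1 \<in> B) (ns ! (j - 1)) (ns ! j))"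
      unfolding diff_Suc_1 ball_atLeastAtMost_Suc_split[of r ?P] first
      using True rest by (auto simp: hd_conv_nth)
    then show ?thesis
      using True unfolding chain_lists_def mem_Collect_eq by auto
  qed (simp add: chain_lists_def)
qed

definition chain_tails :: "step_rule \<Rightarrow> bool \<Rightarrow> nat \<Rightarrow> nat \<Rightarrow> nat \<Rightarrow> nat set \<Rightarrow> nat list set" where
  "chain_tails R b m r N B = {ns \<in> chain_lists R r N B. ns \<noteq> [] \<longrightarrow> R b (1 \<in> B) m (hd ns)}"

lemma chain_lists_cons_pos:
  assumes "0 \<notin> B"
  shows "chain_lists R (Suc r) N (cons_pos b B) =
    (\<lambda>(m, ns). m # ns) ` (SIGMA m:{1..N - 1}. chain_tails R b m r N B)"
proof (intro set_eqI iffI)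
  fix ns assume "ns \<in> chain_lists R (Suc r) N (cons_pos b B)"
  moreover obtain m ns' where "ns = m # ns'"
    using calculation unfolding chain_lists_def by (cases ns) auto
  ultimately show "ns \<in> (\<lambda>(m, ns). m # ns) ` (SIGMA m:{1..N - 1}. chain_tails R b m r N B)"
    using Cons_mem_chain_lists_cons_pos[OF assms] unfolding chain_tails_def by auto
qed (use Cons_mem_chain_lists_cons_pos[OF assms] in \<open>auto simp: chain_tails_def\<close>)

lemma sum_Pow_ones_Cons_chain_lists:
  "(\<Sum>A\<in>Pow (ones (a # k)). \<Sum>ns\<in>chain_lists R (Suc (length k)) N A. F A ns) =
   (\<Sum>b\<in>{b. b \<longrightarrow> a = 1}. \<Sum>B\<in>Pow (ones k). \<Sum>m\<in>{1..N - 1}.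
      \<Sum>ns\<in>chain_tails R b m (length k) N B. F (cons_pos b B) (m # ns))"
proof -
  let ?G = "\<lambda>A. \<Sum>ns\<in>chain_lists R (Suc (length k)) N A. F A ns"
  let ?C = "\<lambda>b B m. chain_tails R b m (length k) N B"
  have "(\<Sum>A\<in>Pow (ones (a # k)). ?G A) =
      (\<Sum>x\<in>{b. b \<longrightarrow> a = 1} \<times> Pow (ones k). ?G ((\<lambda>(b, B). cons_pos b B) x))"
    by (rule sum.reindex_bij_betw[OF bij_betw_cons_pos_Pow_ones, symmetric])
  also have "\<dots> = (\<Sum>(b, B)\<in>{b. b \<longrightarrow> a = 1} \<times> Pow (ones k). ?G (cons_pos b B))"
    by (simp add: case_prod_unfold)
  also have "\<dots> = (\<Sum>b\<in>{b. b \<longrightarrow> a = 1}. \<Sum>B\<in>Pow (ones k). ?G (cons_pos b B))"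
    by (rule sum.cartesian_product[symmetric])
  also have "\<dots> = (\<Sum>b\<in>{b. b \<longrightarrow> a = 1}. \<Sum>B\<in>Pow (ones k). \<Sum>m\<in>{1..N - 1}. \<Sum>ns\<in>?C b B m.
      F (cons_pos b B) (m # ns))"
  proof (intro sum.cong refl)
    fix b B assume "B \<in> Pow (ones k)"
    then have B0: "0 \<notin> B"
      using ones_subset[of k] by auto
    have "?G (cons_pos b B) = (\<Sum>(m, ns)\<in>Sigma {1..N - 1} (?C b B). F (cons_pos b B) (m # ns))"
      unfolding chain_lists_cons_pos[OF B0]
      by (subst sum.reindex) (auto intro: inj_onI simp: case_prod_unfold)
    also have "\<dots> = (\<Sum>m\<in>{1..N - 1}. \<Sum>ns\<in>?C b B m. F (cons_pos b B) (m # ns))"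
      by (rule sum.Sigma[symmetric])
        (auto simp: chain_tails_def intro: finite_subset[OF _ finite_chain_lists])
    finally show "?G (cons_pos b B) = \<dots>" .
  qed
  finally show ?thesis .
qed

lemma prod_cons_pos:
  assumes "finite B" "0 \<notin> B"
  shows "(\<Prod>i\<in>cons_pos b B. f i) = (if b then f 1 else 1) * (\<Prod>i\<in>B. f (Suc i))"
proof -
  have "(\<Prod>i\<in>cons_pos b B. f i) = (\<Prod>i\<in>(if b then {1} else {}). f i) * (\<Prod>i\<in>Suc ` B. f i)"
    unfolding cons_pos_def using assms by (intro prod.union_disjoint) auto
  then show ?thesis
    by (simp add: prod.reindex)
qed

lemma atLeastAtMost_Suc_diff_cons_pos:
  assumes "B \<subseteq> {1..r}"
  shows "{1..Suc r} - cons_pos b B = cons_pos (\<not> b) ({1..r} - B)"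
proof (rule set_eqI)
  fix i show "i \<in> {1..Suc r} - cons_pos b B \<longleftrightarrow> i \<in> cons_pos (\<not> b) ({1..r} - B)"
    using assms unfolding cons_pos_def by (cases i) auto
qed

text \<open>The value 0 for a marked first position with \<open>a \<noteq> 1\<close> accounts for \<open>A \<subseteq> ones k\<close>.\<close>
definition head_factor :: "nat \<Rightarrow> nat \<Rightarrow> nat \<Rightarrow> bool \<Rightarrow> real" where
  "head_factor N a m b =
     (if b then (if a = 1 then 1 / (real N - real m) else 0) else 1 / real m ^ a)"

lemma term_diamond_Cons:
  assumes "B \<subseteq> {1..length k}" "b \<longrightarrow> a = 1"
  shows "term_diamond N (a # k) (cons_pos b B) (m # ns) =
    head_factor N a m b * term_diamond N k B ns"
proof -
  have B: "finite B" "0 \<notin> B" and C: "finite ({1..length k} - B)" "0 \<notin> {1..length k} - B"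
    using assms(1) finite_subset by auto
  have shift: "(\<Prod>i\<in>I. g ((m # ns) ! i) ((a # k) ! i)) = (\<Prod>i\<in>I. g (ns ! (i - 1)) (k ! (i - 1)))"
    if "0 \<notin> I" for I and g :: "nat \<Rightarrow> nat \<Rightarrow> real"
    using that by (intro prod.cong) (auto simp: nth_Cons')
  have "(\<Prod>i\<in>cons_pos b B. 1 / (real N - real ((m # ns) ! (i - 1)))) =
      (if b then 1 / (real N - real m) else 1) * (\<Prod>i\<in>B. 1 / (real N - real (ns ! (i - 1))))"
    using B shift[of B "\<lambda>x y. 1 / (real N - real x)"] by (simp add: prod_cons_pos)
  moreover have "(\<Prod>i\<in>{1..length (a # k)} - cons_pos b B.
        1 / real ((m # ns) ! (i - 1)) ^ ((a # k) ! (i - 1))) =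
      (if b then 1 else 1 / real m ^ a) *
      (\<Prod>i\<in>{1..length k} - B. 1 / real (ns ! (i - 1)) ^ (k ! (i - 1)))"
    unfolding length_Cons atLeastAtMost_Suc_diff_cons_pos[OF assms(1)]
    using C shift[of "{1..length k} - B" "\<lambda>x y. 1 / real x ^ y"] by (simp add: prod_cons_pos)
  ultimately show ?thesis
    unfolding term_diamond_def head_factor_def using assms(2) by auto
qed

text \<open>\<open>head_sum R N k m b\<close> is the part of the sum of \<open>term_diamond N k A ns\<close> over
  \<open>A \<subseteq> ones k\<close>, \<open>ns \<in> chain_lists R (length k) N A\<close> with \<open>hd ns = m\<close> and \<open>1 \<in> A \<longleftrightarrow> b\<close>
  (see \<open>sum_chain_lists_by_head\<close>).\<close>
fun head_sum :: "step_rule \<Rightarrow> nat \<Rightarrow> nat list \<Rightarrow> nat \<Rightarrow> bool \<Rightarrow> real" where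
  "head_sum R N [] m b = 0"
| "head_sum R N [a] m b = head_factor N a m b"
| "head_sum R N (a # c # l) m b = head_factor N a m b * (\<Sum>m'\<in>{1..N - 1}.
      (if R b True m m' then head_sum R N (c # l) m' True else 0) +
      (if R b False m m' then head_sum R N (c # l) m' False else 0))"

lemma head_sum_Cons:
  "k \<noteq> [] \<Longrightarrow> head_sum R N (a # k) m b = head_factor N a m b * (\<Sum>m'\<in>{1..N - 1}.
      (if R b True m m' then head_sum R N k m' True else 0) +
      (if R b False m m' then head_sum R N k m' False else 0))"
  by (cases k) auto

lemma sum_Pow_ones_Cons_term_diamond:
  "(\<Sum>A\<in>Pow (ones (a # k)). \<Sum>ns\<in>chain_lists R (Suc (length k)) N A.
      if P (1 \<in> A) (hd ns) then term_diamond N (a # k) A ns else 0) =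
   (\<Sum>m\<in>{1..N - 1}. \<Sum>b\<in>{b. b \<longrightarrow> a = 1}. if P b m then head_factor N a m b *
      (\<Sum>B\<in>Pow (ones k). \<Sum>ns\<in>chain_tails R b m (length k) N B. term_diamond N k B ns) else 0)"
proof -
  have "(\<Sum>A\<in>Pow (ones (a # k)). \<Sum>ns\<in>chain_lists R (Suc (length k)) N A.
          if P (1 \<in> A) (hd ns) then term_diamond N (a # k) A ns else 0)
     = (\<Sum>b\<in>{b. b \<longrightarrow> a = 1}. \<Sum>B\<in>Pow (ones k). \<Sum>m\<in>{1..N - 1}. \<Sum>ns\<in>chain_tails R b m (length k) N B.
          if P b m then head_factor N a m b * term_diamond N k B ns else 0)"
    unfolding sum_Pow_ones_Cons_chain_lists list.sel(1)
  proof (intro sum.cong refl)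
    fix b B m ns assume "b \<in> {b. b \<longrightarrow> a = 1}" "B \<in> Pow (ones k)"
    moreover have B: "B \<subseteq> {1..length k}"
      using calculation(2) ones_subset[of k] by auto
    moreover have "1 \<in> cons_pos b B \<longleftrightarrow> b"
      using B by (intro one_mem_cons_pos) auto
    ultimately show "(if P (1 \<in> cons_pos b B) m
        then term_diamond N (a # k) (cons_pos b B) (m # ns) else 0) =
      (if P b m then head_factor N a m b * term_diamond N k B ns else 0)"
      by (simp add: term_diamond_Cons)
  qed
  also have "\<dots> = (\<Sum>b\<in>{b. b \<longrightarrow> a = 1}. \<Sum>m\<in>{1..N - 1}. if P b m then head_factor N a m b *
      (\<Sum>B\<in>Pow (ones k). \<Sum>ns\<in>chain_tails R b m (length k) N B. term_diamond N k B ns) else 0)"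
    by (intro sum.cong refl, subst sum.swap) (auto intro!: sum.cong simp: sum_distrib_left)
  finally show ?thesis
    by (subst (asm) sum.swap)
qed

lemma sum_chain_lists_by_head:
  assumes "k \<noteq> []"
  shows "(\<Sum>A\<in>Pow (ones k). \<Sum>ns\<in>chain_lists R (length k) N A.
            if P (1 \<in> A) (hd ns) then term_diamond N k A ns else 0) =
         (\<Sum>m\<in>{1..N - 1}. (if P True m then head_sum R N k m True else 0) +
            (if P False m then head_sum R N k m False else 0))"
  using assms
proof (induction k arbitrary: P)
  case (Cons a k)
  have tail: "head_sum R N (a # k) m b = head_factor N a m b *
      (\<Sum>B\<in>Pow (ones k). \<Sum>ns\<in>chain_tails R b m (length k) N B. term_diamond N k B ns)" for b m
  proof (cases "k = []")
    case True
    then have "chain_tails R b m (length k) N {} = {[]}"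
      unfolding chain_tails_def chain_lists_def by auto
    then show ?thesis
      using True by (simp add: ones_def term_diamond_def)
  next
    case False
    then have "chain_tails R b m (length k) N B =
        {ns \<in> chain_lists R (length k) N B. R b (1 \<in> B) m (hd ns)}" for B
      unfolding chain_tails_def chain_lists_def by auto
    then show ?thesis
      using Cons.IH[OF False, of "\<lambda>c m'. R b c m m'"] head_sum_Cons[OF False]
      by (simp add: sum.inter_filter[OF finite_chain_lists])
  qed
  have flags: "{b. b \<longrightarrow> a = 1} = (if a = 1 then {True, False} else {False})"
    by auto
  have "(\<Sum>A\<in>Pow (ones (a # k)). \<Sum>ns\<in>chain_lists R (length (a # k)) N A.
      if P (1 \<in> A) (hd ns) then term_diamond N (a # k) A ns else 0) =
    (\<Sum>m\<in>{1..N - 1}. \<Sum>b\<in>{b. b \<longrightarrow> a = 1}. if P b m then head_sum R N (a # k) m b else 0)"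
    unfolding length_Cons sum_Pow_ones_Cons_term_diamond tail ..
  moreover have "head_sum R N (a # k) m True = 0" if "a \<noteq> 1" for m
    using that by (simp add: tail head_factor_def)
  ultimately show ?case
    unfolding flags by (cases "a = 1") (simp_all cong: if_cong)
qed simp

lemma sum_list_map_sum_swap:
  "sum_list (map (\<lambda>l. \<Sum>m\<in>M. g l m) xs) = (\<Sum>m\<in>M. sum_list (map (\<lambda>l. g l m) xs))"
  by (induction xs) (auto simp: sum.distrib)

lemma sum_list_head_sum_Cons:
  assumes "[] \<notin> set ls"
  shows "sum_list (map (\<lambda>l. head_sum R N (a # l) m b) ls) = head_factor N a m b * (\<Sum>m'\<in>{1..N - 1}.
      (if R b True m m' then sum_list (map (\<lambda>l. head_sum R N l m' True) ls) else 0) +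
      (if R b False m m' then sum_list (map (\<lambda>l. head_sum R N l m' False) ls) else 0))"
proof -
  have "sum_list (map (\<lambda>l. head_sum R N (a # l) m b) ls) =
      sum_list (map (\<lambda>l. head_factor N a m b * (\<Sum>m'\<in>{1..N - 1}.
        (if R b True m m' then head_sum R N l m' True else 0) +
        (if R b False m m' then head_sum R N l m' False else 0))) ls)"
    using assms by (intro arg_cong[where f = sum_list] map_cong refl head_sum_Cons) auto
  moreover have "sum_list (map (\<lambda>l. if P then f l else 0) ls) =
      (if P then sum_list (map f ls) else 0)"
    for P and f :: "nat list \<Rightarrow> real"
    by simp
  ultimately show ?thesis
    by (simp add: sum_list_const_mult sum_list_map_sum_swap sum_list_addf)
qed

lemma head_sum_add_head:
  assumes "1 \<le> a" "1 \<le> c"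
  shows "head_sum R N ((a + c) # l) m b =
    (if b then 0 else head_sum R N (c # l) m False / real m ^ a)"
  using assms by (cases l) (auto simp: head_factor_def power_add)

lemma sum_list_head_sum_add_hd:
  assumes "\<forall>l\<in>set ls. \<exists>h t. l = h # t \<and> 1 \<le> h" "1 \<le> a"
  shows "sum_list (map (\<lambda>l. head_sum R N (add_hd a l) m b) ls) =
    (if b then 0 else sum_list (map (\<lambda>l. head_sum R N l m False) ls) / real m ^ a)"
proof -
  have "sum_list (map (\<lambda>l. head_sum R N (add_hd a l) m b) ls) =
      sum_list (map (\<lambda>l. if b then 0 else head_sum R N l m False / real m ^ a) ls)"
  proof (intro arg_cong[where f = sum_list] map_cong refl)
    fix l assume "l \<in> set ls"
    then obtain h t where "l = h # t" "1 \<le> h"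
      using assms(1) by blast
    then show "head_sum R N (add_hd a l) m b = (if b then 0 else head_sum R N l m False / real m ^ a)"
      using head_sum_add_head[OF assms(2)] by simp
  qed
  then show ?thesis
    by (cases b) (simp_all add: divide_inverse sum_list_mult_const)
qed

lemma fillings_Cons_hd: "l \<in> set (fillings (x # xs)) \<Longrightarrow> \<exists>h t. l = h # t \<and> x \<le> h"
proof (induction xs arbitrary: x l)
  case (Cons y ys)
  then show ?case
    by (auto dest: Cons.IH)
qed simp

lemma sum_if_le_eq_sum_if_less:
  fixes f :: "nat \<Rightarrow> real"
  assumes "finite M" "m \<in> M"
  shows "(\<Sum>m'\<in>M. if m \<le> m' then f m' else 0) = (\<Sum>m'\<in>M. if m < m' then f m' else 0) + f m"
proof -
  have "(\<Sum>m'\<in>M. if m \<le> m' then f m' else 0) =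
      (\<Sum>m'\<in>M. (if m < m' then f m' else 0) + (if m' = m then f m' else 0))"
    by (intro sum.cong) auto
  then show ?thesis
    using assms by (simp add: sum.distrib)
qed

lemma sum_fillings_head_sum_diamond:
  assumes "\<forall>a\<in>set (x # xs). 0 < a" "m \<in> {1..N - 1}"
  shows "sum_list (map (\<lambda>l. head_sum diamond_step N l m b) (fillings (x # xs))) =
    head_sum star_step N (x # xs) m b"
  using assms
proof (induction xs arbitrary: x m b)
  case (Cons y ys)
  let ?F = "fillings (y # ys)"
  let ?D = "\<lambda>m' c. sum_list (map (\<lambda>l. head_sum diamond_step N l m' c) ?F)"
  let ?S = "\<lambda>m' c. head_sum star_step N (y # ys) m' c"
  have IH: "?D m' c = ?S m' c" if "m' \<in> {1..N - 1}" for m' c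
    using Cons.IH[of y m' c] Cons.prems(1) that by simp
  have comma: "sum_list (map (\<lambda>l. head_sum diamond_step N (x # l) m b) ?F) =
      head_factor N x m b * (\<Sum>m'\<in>{1..N - 1}.
        (if diamond_step b True m m' then ?S m' True else 0) +
        (if diamond_step b False m m' then ?S m' False else 0))"
    using fillings_Cons_hd[of _ y ys] IH
    by (subst sum_list_head_sum_Cons) (auto intro!: sum.cong)
  have plus: "sum_list (map (\<lambda>l. head_sum diamond_step N (add_hd x l) m b) ?F) =
      (if b then 0 else ?S m False / real m ^ x)"
    using Cons.prems fillings_Cons_hd[of _ y ys] IH[OF Cons.prems(2)]
    by (subst sum_list_head_sum_add_hd) force+
  have "sum_list (map (\<lambda>l. head_sum diamond_step N l m b) (fillings (x # y # ys))) =
      sum_list (map (\<lambda>l. head_sum diamond_step N (x # l) m b) ?F) +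
      sum_list (map (\<lambda>l. head_sum diamond_step N (add_hd x l) m b) ?F)"
    by (simp add: comp_def)
  also have "\<dots> = head_sum star_step N (x # y # ys) m b"
  proof (cases b)
    case True
    then show ?thesis
      unfolding comma plus by (simp add: diamond_step_def star_step_def)
  next
    case False
    \<comment> \<open>The diagonal term \<open>m' = m\<close> allowed by \<open>star_step\<close> is the contribution of the plus.\<close>
    have "(\<Sum>m'\<in>{1..N - 1}. (if m < m' then ?S m' True else 0) + (if m \<le> m' then ?S m' False else 0)) =
        (\<Sum>m'\<in>{1..N - 1}. (if m < m' then ?S m' True else 0) + (if m < m' then ?S m' False else 0)) +
        ?S m False"
      using sum_if_le_eq_sum_if_less[OF _ Cons.prems(2), of "\<lambda>m'. ?S m' False"]
      by (simp add: sum.distrib)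
    with False show ?thesis
      unfolding comma plus by (simp add: diamond_step_def star_step_def head_factor_def distrib_left)
  qed
  finally show ?case .
qed simp

lemma sum_Pow_ones_chain_lists_eq_head_sum:
  assumes "k \<noteq> []"
  shows "(\<Sum>A\<in>Pow (ones k). \<Sum>ns\<in>chain_lists R (length k) N A. term_diamond N k A ns) =
    (\<Sum>m\<in>{1..N - 1}. head_sum R N k m True + head_sum R N k m False)"
  using sum_chain_lists_by_head[OF assms, where P = "\<lambda>_ _. True"] by simp

theorem mainTheorem11:
  fixes N :: nat and k :: "nat list"
  assumes "0 < N" and "admissible k"
  shows "zeta_diamond_star N k =
    (\<Sum>A\<in>Pow (ones k). \<Sum>ns\<in>S_star_set (length k) N A. term_diamond N k A ns)"
proof -
  \<comment> \<open>Only nonemptiness and positivity of the entries of \<open>k\<close> are used, not \<open>0 < N\<close> or \<open>2 \<le> last k\<close>.\<close>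
  obtain x xs where k: "k = x # xs" and pos: "\<forall>a\<in>set (x # xs). 0 < a"
    using assms(2) unfolding admissible_def is_index_def by (cases k) auto
  let ?H = "\<lambda>R l m. head_sum R N l m True + head_sum R N l m False"
  have "zeta_diamond_star N k = sum_list (map (\<lambda>l. \<Sum>m\<in>{1..N - 1}. ?H diamond_step l m) (fillings k))"
    unfolding zeta_diamond_star_def zeta_diamond_def S_set_eq_chain_lists k
    using fillings_Cons_hd[of _ x xs]
    by (intro arg_cong[where f = sum_list] map_cong refl sum_Pow_ones_chain_lists_eq_head_sum) auto
  also have "\<dots> = (\<Sum>m\<in>{1..N - 1}. ?H star_step k m)"
    unfolding k
    by (simp add: sum_list_map_sum_swap sum_list_addf sum_fillings_head_sum_diamond[OF pos])
  also have "\<dots> = (\<Sum>A\<in>Pow (ones k). \<Sum>ns\<in>S_star_set (length k) N A. term_diamond N k A ns)"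
    unfolding S_star_set_eq_chain_lists k
    by (rule sum_Pow_ones_chain_lists_eq_head_sum[symmetric]) simp
  finally show ?thesis .
qed

end
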